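(* Let $\varepsilon>0$, $\delta>0$, $\eta>0$. For all $x\in\mathbb R^n$, the randomized estimator $\tilde m(x)$ defined below can be computed in $O(n\log n)$ operations.
   Context: For $x\in\mathbb R^n$, $x_{(1)}\le\cdots\le x_{(n)}$ are its ordered coordinates, $\ell=\lfloor n/2\rfloor$, and $\hat m(x)=x_{(\ell)}$. $\mathrm{d_H}(x,x')$ is the number of coordinates in which $x,x'\in\mathbb R^n$ differ. Define $\hat A(x)=\min\{k=0,1,\ldots:\exists x'\in\mathbb R^n,\ \mathrm{d_H}(x,x')=k,\ |\hat m(x)-\hat m(x')|>\eta\}$ and $\tilde A(x)=\hat A(x)+Z_1/\varepsilon$, where $Z_1,Z_2$ are independent Laplace random variables with parameter $1$. Set $\tilde m(x)=\perp$ ("No Reply") if $\tilde A(x)\le1+\frac1\varepsilon\log(2/\delta)$ and $\tilde m(x)=\hat m(x)+\frac\eta\varepsilon Z_2$ otherwise. Sampling $Z_1,Z_2$ counts as $O(1)$ operations. *)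

theory Defs
  imports Complex_Main
begin

text \<open>A point of R^n is a list of reals of length n. Ordered coordinates
  x_(1) <= ... <= x_(n) are given by sort; x_(i) = sort x ! (i-1).\<close>

definition ord_coord :: "real list \<Rightarrow> nat \<Rightarrow> real" where
  "ord_coord x i = sort x ! (i - 1)"

definition ell :: "real list \<Rightarrow> nat" where
  "ell x = length x div 2"

definition med_hat :: "real list \<Rightarrow> real" where
  "med_hat x = ord_coord x (ell x)"

definition dH :: "real list \<Rightarrow> real list \<Rightarrow> nat" where
  "dH x x' = card {i. i < length x \<and> x ! i \<noteq> x' ! i}"

definition A_hat :: "real \<Rightarrow> real list \<Rightarrow> nat" where
  "A_hat \<eta> x = (LEAST k. \<exists>x'. length x' = length x \<and> dH x x' = k \<and>
                     \<bar>med_hat x - med_hat x'\<bar> > \<eta>)"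

definition A_tilde :: "real \<Rightarrow> real \<Rightarrow> real list \<Rightarrow> real \<Rightarrow> real" where
  "A_tilde \<epsilon> \<eta> x z1 = real (A_hat \<eta> x) + z1 / \<epsilon>"

text \<open>None represents the output "No Reply" (\<bottom>). z1, z2 are the sampled
  values of the Laplace variables Z1, Z2.\<close>
definition m_tilde :: "real \<Rightarrow> real \<Rightarrow> real \<Rightarrow> real list \<Rightarrow> real \<Rightarrow> real \<Rightarrow> real option" where
  "m_tilde \<epsilon> \<delta> \<eta> x z1 z2 =
     (if A_tilde \<epsilon> \<eta> x z1 \<le> 1 + (1/\<epsilon>) * ln (2/\<delta>) then None
      else Some (med_hat x + (\<eta>/\<epsilon>) * z2))"

text \<open>Each function returns (result, number of elementary operations).
  Unit-cost RAM model: comparisons, real arithmetic, list indexing and the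
  sampling of Z1, Z2 cost O(1).\<close>

fun merge_c :: "real list \<Rightarrow> real list \<Rightarrow> real list \<times> nat" where
  "merge_c [] ys = (ys, 1)"
| "merge_c xs [] = (xs, 1)"
| "merge_c (x # xs) (y # ys) =
     (if x \<le> y then (let (r, c) = merge_c xs (y # ys) in (x # r, c + 1))
      else (let (r, c) = merge_c (x # xs) ys in (y # r, c + 1)))"

function msort_c :: "real list \<Rightarrow> real list \<times> nat" where
  "msort_c xs =
     (if length xs \<le> 1 then (xs, 1)
      else (let (a, ca) = msort_c (take (length xs div 2) xs);
                (b, cb) = msort_c (drop (length xs div 2) xs);
                (r, cr) = merge_c a b
            in (r, ca + cb + cr + 1)))"
  by pat_completeness auto
termination
  by (relation "measure length") auto

text \<open>Scan over k = 1, 2, ... on the sorted list s (0-indexed, so the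
  median x_(l) is s ! (l-1)), testing whether changing k coordinates can
  move the median by more than eta.\<close>
fun scan_c :: "real list \<Rightarrow> nat \<Rightarrow> real \<Rightarrow> nat \<Rightarrow> nat \<Rightarrow> nat \<times> nat" where
  "scan_c s l \<eta> k 0 = (k, 1)"
| "scan_c s l \<eta> k (Suc fuel) =
     (if (l + k > length s \<or> s ! (l - 1 + k) - s ! (l - 1) > \<eta>)
         \<or> (k \<ge> l \<or> s ! (l - 1) - s ! (l - 1 - k) > \<eta>)
      then (k, 1)
      else (let (r, c) = scan_c s l \<eta> (k + 1) fuel in (r, c + 1)))"

definition m_tilde_alg ::
  "real \<Rightarrow> real \<Rightarrow> real \<Rightarrow> real list \<Rightarrow> real \<Rightarrow> real \<Rightarrow> real option \<times> nat" where
  "m_tilde_alg \<epsilon> \<delta> \<eta> x z1 z2 =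
     (let (s, c1) = msort_c x;
          l = length x div 2;
          (a, c2) = scan_c s l \<eta> 1 (length x);
          At = real a + z1 / \<epsilon>
      in (if At \<le> 1 + (1/\<epsilon>) * ln (2/\<delta>) then None
          else Some (s ! (l - 1) + (\<eta>/\<epsilon>) * z2), c1 + c2 + 10))"

end

theory Submission
  imports Defs "HOL-Library.Multiset" "HOL-Library.Log_Nat"
begin

(* Merge sort puts x in order with O(n log n) operations. Let s = sort x and j = l - 1. Changing
   k coordinates changes each count #{i. x_i \<le> w} by at most k, so it keeps the l-th order
   statistic inside [s ! (j - k), s ! (j + k)]; conversely, moving k entries across the threshold
   s ! (j + k) (or s ! (j - k)) onto it reaches that endpoint. Hence A_hat x is the least k for
   which one of the two endpoints is more than eta away from the median or does not exist, and
   the linear scan scan_c finds it with O(n) operations. *)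

lemma mset_merge_c: "mset (fst (merge_c xs ys)) = mset xs + mset ys"
  by (induction xs ys rule: merge_c.induct) (auto simp: split_beta)

lemma sorted_merge_c: "sorted xs \<Longrightarrow> sorted ys \<Longrightarrow> sorted (fst (merge_c xs ys))"
proof (induction xs ys rule: merge_c.induct)
  case (3 x xs y ys)
  have set_merge: "set (fst (merge_c as bs)) = set as \<union> set bs" for as bs
    by (metis mset_merge_c set_mset_mset set_mset_union)
  show ?case
    using 3 by (auto simp: split_beta set_merge)
qed auto

lemma merge_c_cost: "snd (merge_c xs ys) \<le> length xs + length ys + 1"
  by (induction xs ys rule: merge_c.induct) (auto split: prod.splits)

declare msort_c.simps [simp del]

lemma msort_c_short: "length xs \<le> 1 \<Longrightarrow> msort_c xs = (xs, 1)"
  by (subst msort_c.simps) simp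

lemma msort_c_long:
  assumes "\<not> length xs \<le> 1"
  defines "a \<equiv> msort_c (take (length xs div 2) xs)" and "b \<equiv> msort_c (drop (length xs div 2) xs)"
  shows "msort_c xs = (fst (merge_c (fst a) (fst b)),
                       snd a + snd b + snd (merge_c (fst a) (fst b)) + 1)"
  using assms by (subst msort_c.simps) (simp add: Let_def split: prod.split)

lemma msort_c_eq_sort: "fst (msort_c xs) = sort xs"
proof (induction xs rule: msort_c.induct)
  case (1 xs)
  show ?case
  proof (cases "length xs \<le> 1")
    case True
    then have "sorted xs" by (cases xs) auto
    then show ?thesis using True by (simp add: msort_c_short sorted_sort_id)
  next
    case False
    let ?d = "length xs div 2"
    have "fst (msort_c xs) = fst (merge_c (sort (take ?d xs)) (sort (drop ?d xs)))"
      using 1(1)[OF False] 1(2)[OF False refl prod.collapse] False by (simp add: msort_c_long)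
    moreover have "mset (fst (merge_c (sort (take ?d xs)) (sort (drop ?d xs)))) = mset xs"
      by (simp add: mset_merge_c flip: mset_append)
    ultimately show ?thesis
      by (metis properties_for_sort sorted_merge_c sorted_sort)
  qed
qed

lemma msort_c_cost_pow2:
  "1 \<le> length xs \<Longrightarrow> length xs \<le> 2 ^ k \<Longrightarrow> snd (msort_c xs) \<le> 4 * length xs * (k + 1)"
proof (induction k arbitrary: xs)
  case 0
  then show ?case by (simp add: msort_c_short)
next
  case (Suc k)
  show ?case
  proof (cases "length xs \<le> 1")
    case True
    then show ?thesis using Suc.prems by (simp add: msort_c_short)
  next
    case False
    define n d where "n = length xs" and "d = n div 2"
    have halves: "1 \<le> d" "d \<le> 2 ^ k" "1 \<le> n - d" "n - d \<le> 2 ^ k"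
      using False Suc.prems(2) by (auto simp: n_def d_def)
    have "snd (msort_c (take d xs)) \<le> 4 * d * (k + 1)"
      using Suc.IH[of "take d xs"] halves by (simp add: n_def d_def)
    moreover have "snd (msort_c (drop d xs)) \<le> 4 * (n - d) * (k + 1)"
      using Suc.IH[of "drop d xs"] halves by (simp add: n_def)
    moreover have "snd (merge_c (sort (take d xs)) (sort (drop d xs))) \<le> n + 1"
      using merge_c_cost[of "sort (take d xs)" "sort (drop d xs)"] halves
      by (simp add: n_def d_def)
    ultimately have "snd (msort_c xs) \<le> 4 * d * (k + 1) + 4 * (n - d) * (k + 1) + n + 2"
      using False by (simp add: msort_c_long msort_c_eq_sort n_def d_def)
    also have "\<dots> = 4 * (d + (n - d)) * (k + 1) + n + 2"
      by (simp only: add_mult_distrib add_mult_distrib2)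
    also have "\<dots> = 4 * n * (k + 1) + n + 2"
      using halves by simp
    also have "\<dots> \<le> 4 * n * (Suc k + 1)"
      using False by (simp add: n_def algebra_simps)
    finally show ?thesis by (simp add: n_def)
  qed
qed

lemma half_le_ln:
  fixes x :: real
  assumes "2 \<le> x"
  shows "1 / 2 \<le> ln x"
proof -
  have "1 / 2 \<le> ln (2 :: real)"
    using ln_ge_iff[of 2 "1/2"] exp_half_le2 by simp
  also have "\<dots> \<le> ln x"
    using assms by (intro ln_mono) auto
  finally show ?thesis .
qed

lemma msort_c_cost:
  assumes "2 \<le> length xs"
  shows "real (snd (msort_c xs)) \<le> 24 * real (length xs) * ln (real (length xs))"
proof -
  define n where "n = length xs"
  have n: "2 \<le> real n" using assms by (simp add: n_def)
  have ln_n: "1 / 2 \<le> ln (real n)"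
    using half_le_ln[OF n] .
  have "log 2 (real n) \<le> 2 * ln (real n)"
    using half_le_ln[OF order_refl] ln_n by (simp add: log_def divide_le_eq)
  then have depth: "real (ceillog2 n) + 1 \<le> 6 * ln (real n)"
    using ceillog2_less_log[of n] n ln_n by simp
  have "real (snd (msort_c xs)) \<le> real (4 * n * (ceillog2 n + 1))"
    using msort_c_cost_pow2[OF _ le_two_power_ceillog2, of xs] assms
    by (simp only: of_nat_le_iff n_def)
  also have "\<dots> = 4 * real n * (real (ceillog2 n) + 1)" by (simp add: algebra_simps)
  also have "\<dots> \<le> 4 * real n * (6 * ln (real n))"
    using depth n by (intro mult_left_mono) auto
  finally show ?thesis by (simp add: n_def)
qed

lemma sorted_nth_iff_less_length_filter:
  fixes s :: "'a::linorder list"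
  assumes "sorted s" "j < length s" and down_closed: "\<And>a b. a \<le> b \<Longrightarrow> P b \<Longrightarrow> P a"
  shows "P (s ! j) \<longleftrightarrow> j < length (filter P s)"
proof
  assume "P (s ! j)"
  then have "{..j} \<subseteq> {i. i < length s \<and> P (s ! i)}"
    using assms by (auto intro: down_closed sorted_nth_mono)
  then have "card {..j} \<le> card {i. i < length s \<and> P (s ! i)}"
    by (intro card_mono) auto
  then show "j < length (filter P s)"
    by (simp add: length_filter_conv_card)
next
  assume less: "j < length (filter P s)"
  show "P (s ! j)"
  proof (rule ccontr)
    assume "\<not> P (s ! j)"
    then have "i < j" if "i < length s" "P (s ! i)" for i
      using that down_closed sorted_nth_mono[OF \<open>sorted s\<close>] by (meson not_less)
    then have "{i. i < length s \<and> P (s ! i)} \<subseteq> {..<j}" by auto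
    then have "card {i. i < length s \<and> P (s ! i)} \<le> j"
      by (metis card_lessThan card_mono finite_lessThan)
    then show False using less by (simp add: length_filter_conv_card)
  qed
qed

lemma sort_nth_iff_less_length_filter:
  fixes xs :: "'a::linorder list"
  assumes "j < length xs" "\<And>a b. a \<le> b \<Longrightarrow> P b \<Longrightarrow> P a"
  shows "P (sort xs ! j) \<longleftrightarrow> j < length (filter P xs)"
  using sorted_nth_iff_less_length_filter[of "sort xs" j P] assms by (simp add: filter_sort)

lemma sort_nth_le_iff:
  fixes xs :: "'a::linorder list"
  shows "j < length xs \<Longrightarrow> sort xs ! j \<le> w \<longleftrightarrow> j < length (filter (\<lambda>z. z \<le> w) xs)"
  by (rule sort_nth_iff_less_length_filter) auto

lemma sort_nth_less_iff:
  fixes xs :: "'a::linorder list"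
  shows "j < length xs \<Longrightarrow> sort xs ! j < w \<longleftrightarrow> j < length (filter (\<lambda>z. z < w) xs)"
  by (rule sort_nth_iff_less_length_filter) auto

lemma dH_commute: "length ys = length xs \<Longrightarrow> dH ys xs = dH xs ys"
  unfolding dH_def by metis

lemma length_filter_le_add_dH:
  assumes "length ys = length xs"
  shows "length (filter P xs) \<le> length (filter P ys) + dH xs ys"
proof -
  have "{i. i < length xs \<and> P (xs ! i)} \<subseteq>
          {i. i < length ys \<and> P (ys ! i)} \<union> {i. i < length xs \<and> xs ! i \<noteq> ys ! i}"
    using assms by auto
  then have "card {i. i < length xs \<and> P (xs ! i)} \<le>
               card ({i. i < length ys \<and> P (ys ! i)} \<union> {i. i < length xs \<and> xs ! i \<noteq> ys ! i})"
    by (intro card_mono) auto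
  also have "\<dots> \<le> card {i. i < length ys \<and> P (ys ! i)} + dH xs ys"
    unfolding dH_def by (rule card_Un_le)
  finally show ?thesis by (simp add: length_filter_conv_card)
qed

lemma sort_nth_le_dH:
  assumes "length ys = length xs" "j + dH xs ys < length xs"
  shows "sort ys ! j \<le> sort xs ! (j + dH xs ys)"
proof -
  let ?w = "sort xs ! (j + dH xs ys)"
  have "j + dH xs ys < length (filter (\<lambda>z. z \<le> ?w) xs)"
    using sort_nth_le_iff[of "j + dH xs ys" xs ?w] assms by simp
  then have "j < length (filter (\<lambda>z. z \<le> ?w) ys)"
    using length_filter_le_add_dH[OF assms(1)] by (meson add_less_cancel_right order_less_le_trans)
  then show ?thesis
    using sort_nth_le_iff[of j ys ?w] assms by simp
qed

lemma sort_nth_ge_dH: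
  assumes "length ys = length xs" "dH xs ys \<le> j" "j < length xs"
  shows "sort xs ! (j - dH xs ys) \<le> sort ys ! j"
proof -
  let ?w = "sort xs ! (j - dH xs ys)"
  have "length (filter (\<lambda>z. z < ?w) xs) \<le> j - dH xs ys"
    using sort_nth_less_iff[of "j - dH xs ys" xs ?w] assms(3) by (simp add: less_imp_diff_less)
  moreover have "length (filter (\<lambda>z. z < ?w) ys) \<le> length (filter (\<lambda>z. z < ?w) xs) + dH xs ys"
    using length_filter_le_add_dH[of xs ys] dH_commute[OF assms(1)] assms(1) by simp
  ultimately have "length (filter (\<lambda>z. z < ?w) ys) \<le> j"
    using assms(2) by linarith
  then show ?thesis
    using sort_nth_less_iff[of j ys ?w] assms by simp
qed

lemma exists_dH_length_filter_decrease:
  assumes "k \<le> length (filter P xs)" "\<not> P v"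
  shows "\<exists>ys. length ys = length xs \<and> dH xs ys = k \<and>
               length (filter P ys) + k = length (filter P xs)"
proof -
  obtain D where D: "D \<subseteq> {i. i < length xs \<and> P (xs ! i)}" "card D = k" "finite D"
    using assms(1) obtain_subset_with_card_n by (metis length_filter_conv_card)
  define ys where "ys = map (\<lambda>i. if i \<in> D then v else xs ! i) [0..<length xs]"
  have len: "length ys = length xs" by (simp add: ys_def)
  have nth: "ys ! i = (if i \<in> D then v else xs ! i)" if "i < length xs" for i
    using that by (simp add: ys_def)
  have "{i. i < length xs \<and> xs ! i \<noteq> ys ! i} = D"
    using D(1) assms(2) nth by (auto split: if_splits)
  then have "dH xs ys = k" by (simp add: dH_def D(2))
  moreover have "{i. i < length ys \<and> P (ys ! i)} = {i. i < length xs \<and> P (xs ! i)} - D"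
    using D(1) assms(2) nth len by (auto split: if_splits)
  then have "length (filter P ys) + k = length (filter P xs)"
    using D card_mono[OF _ D(1)] by (simp add: length_filter_conv_card card_Diff_subset)
  ultimately show ?thesis using len by blast
qed

lemma exists_dH_sort_nth_gt:
  fixes xs :: "real list"
  assumes "j < length xs" "k \<le> Suc j" "0 \<le> \<eta>"
    and "length xs \<le> j + k \<or> sort xs ! j + \<eta> < sort xs ! (j + k)"
  shows "\<exists>ys. length ys = length xs \<and> dH xs ys = k \<and> sort xs ! j + \<eta> < sort ys ! j"
proof -
  define w where "w = (if length xs \<le> j + k then sort xs ! j + \<eta> + 1 else sort xs ! (j + k))"
  \<comment> \<open>Moving k entries below w up to w leaves at most j entries below w.\<close>
  have gt: "sort xs ! j + \<eta> < w"
    using assms(4) by (auto simp: w_def)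
  have few_below: "length (filter (\<lambda>z. z < w) xs) \<le> j + k"
  proof (cases "length xs \<le> j + k")
    case True
    then show ?thesis using length_filter_le[of _ xs] by (meson le_trans)
  next
    case False
    then show ?thesis using sort_nth_less_iff[of "j + k" xs w] by (simp add: w_def)
  qed
  have "j < length (filter (\<lambda>z. z < w) xs)"
    using sort_nth_less_iff[of j xs w] gt assms(1,3) by simp
  then obtain ys where ys: "length ys = length xs" "dH xs ys = k"
      "length (filter (\<lambda>z. z < w) ys) + k = length (filter (\<lambda>z. z < w) xs)"
    using exists_dH_length_filter_decrease[of k "\<lambda>z. z < w" xs w] assms(2) by auto
  then have "\<not> sort ys ! j < w"
    using sort_nth_less_iff[of j ys w] few_below assms(1) by simp
  then show ?thesis using ys gt by auto
qed

lemma exists_dH_sort_nth_lt: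
  fixes xs :: "real list"
  assumes "j < length xs" "k \<le> length xs - j" "0 \<le> \<eta>"
    and "j < k \<or> sort xs ! (j - k) < sort xs ! j - \<eta>"
  shows "\<exists>ys. length ys = length xs \<and> dH xs ys = k \<and> sort ys ! j < sort xs ! j - \<eta>"
proof -
  define w where "w = (if j < k then sort xs ! j - \<eta> - 1 else sort xs ! (j - k))"
  have lt: "w < sort xs ! j - \<eta>"
    using assms(4) by (auto simp: w_def)
  have many_below: "j < length (filter (\<lambda>z. z \<le> w) xs) + k"
  proof (cases "j < k")
    case False
    then show ?thesis
      using sort_nth_le_iff[of "j - k" xs w] assms(1) by (simp add: w_def less_imp_diff_less)
  qed simp
  have "length (filter (\<lambda>z. z \<le> w) xs) \<le> j"
    using sort_nth_le_iff[of j xs w] lt assms(1,3) by simp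
  then have "k \<le> length (filter (\<lambda>z. w < z) xs)"
    using sum_length_filter_compl[of "\<lambda>z. z \<le> w" xs] assms(2) by (simp add: not_le)
  then obtain ys where ys: "length ys = length xs" "dH xs ys = k"
      "length (filter (\<lambda>z. w < z) ys) + k = length (filter (\<lambda>z. w < z) xs)"
    using exists_dH_length_filter_decrease[of k "\<lambda>z. w < z" xs w] by auto
  then have "j < length (filter (\<lambda>z. z \<le> w) ys)"
    using many_below sum_length_filter_compl[of "\<lambda>z. z \<le> w" xs]
      sum_length_filter_compl[of "\<lambda>z. z \<le> w" ys] by (simp add: not_le)
  then have "sort ys ! j \<le> w"
    using sort_nth_le_iff[of j ys w] ys(1) assms(1) by simp
  then show ?thesis using ys lt by auto
qed

(* l is 1-based as in ord_coord; an endpoint outside the list counts as escaping. *)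
definition order_stat_escapes :: "real list \<Rightarrow> nat \<Rightarrow> real \<Rightarrow> nat \<Rightarrow> bool" where
  "order_stat_escapes s l \<eta> k \<longleftrightarrow>
     (l + k > length s \<or> s ! (l - 1 + k) - s ! (l - 1) > \<eta>) \<or>
     (k \<ge> l \<or> s ! (l - 1) - s ! (l - 1 - k) > \<eta>)"

lemma A_hat_eq_Least_order_stat_escapes:
  assumes "2 \<le> length x" "0 \<le> \<eta>"
  shows "A_hat \<eta> x = (LEAST k. order_stat_escapes (sort x) (length x div 2) \<eta> k)"
proof -
  define n l where "n = length x" and "l = n div 2"
  define j k0 where "j = l - 1" and "k0 = (LEAST k. order_stat_escapes (sort x) l \<eta> k)"
  have j: "Suc j = l" "2 * Suc j \<le> n"
    using assms(1) by (auto simp: n_def l_def j_def)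
  have med: "med_hat y = sort y ! j" if "length y = n" for y
    using that by (simp add: med_hat_def ord_coord_def ell_def l_def j_def)
  have "order_stat_escapes (sort x) l \<eta> l"
    by (simp add: order_stat_escapes_def)
  then have esc: "order_stat_escapes (sort x) l \<eta> k0" and "k0 \<le> l"
    unfolding k0_def by (auto intro: LeastI Least_le)
  have "A_hat \<eta> x = k0"
    unfolding A_hat_def
  proof (rule Least_equality)
    from esc consider
      "n \<le> j + k0 \<or> sort x ! j + \<eta> < sort x ! (j + k0)" |
      "j < k0 \<or> sort x ! (j - k0) < sort x ! j - \<eta>"
      using j by (fastforce simp: order_stat_escapes_def n_def)
    then obtain ys where "length ys = n" "dH x ys = k0" "\<eta> < \<bar>sort x ! j - sort ys ! j\<bar>"
    proof cases
      case 1
      then show ?thesis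
        using exists_dH_sort_nth_gt[of j x k0 \<eta>] that \<open>k0 \<le> l\<close> j assms(2) by (force simp: n_def)
    next
      case 2
      then show ?thesis
        using exists_dH_sort_nth_lt[of j x k0 \<eta>] that \<open>k0 \<le> l\<close> j assms(2) by (force simp: n_def)
    qed
    then show "\<exists>x'. length x' = length x \<and> dH x x' = k0 \<and> \<eta> < \<bar>med_hat x - med_hat x'\<bar>"
      using med n_def by metis
  next
    fix k
    assume "\<exists>x'. length x' = length x \<and> dH x x' = k \<and> \<eta> < \<bar>med_hat x - med_hat x'\<bar>"
    then obtain ys where ys: "length ys = n" "dH x ys = k" "\<eta> < \<bar>sort x ! j - sort ys ! j\<bar>"
      using med n_def by metis
    have "order_stat_escapes (sort x) l \<eta> k"
    proof (rule ccontr)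
      assume "\<not> order_stat_escapes (sort x) l \<eta> k"
      then have "j + k < n" "k \<le> j" "sort x ! (j + k) - sort x ! j \<le> \<eta>" "sort x ! j - sort x ! (j - k) \<le> \<eta>"
        using j by (auto simp: order_stat_escapes_def n_def)
      moreover have "sort ys ! j \<le> sort x ! (j + k)" "sort x ! (j - k) \<le> sort ys ! j"
        using sort_nth_le_dH[of ys x j] sort_nth_ge_dH[of ys x j] ys calculation(1,2) n_def by auto
      ultimately show False using ys(3) by linarith
    qed
    then show "k0 \<le> k" unfolding k0_def by (rule Least_le)
  qed
  then show ?thesis by (simp add: k0_def l_def n_def)
qed

lemma scan_c_Suc:
  "scan_c s l \<eta> k (Suc fuel) =
     (if order_stat_escapes s l \<eta> k then (k, 1)
      else (fst (scan_c s l \<eta> (k + 1) fuel), snd (scan_c s l \<eta> (k + 1) fuel) + 1))"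
  by (simp only: scan_c.simps order_stat_escapes_def Let_def split_beta fst_conv snd_conv)

declare scan_c.simps(2) [simp del]

lemma scan_c_cost: "snd (scan_c s l \<eta> k fuel) \<le> fuel + 1"
  by (induction fuel arbitrary: k) (simp_all add: scan_c_Suc)

lemma scan_c_eq_first_escape:
  assumes "order_stat_escapes s l \<eta> k0" "k \<le> k0" "k0 \<le> k + fuel"
    and "\<And>i. k \<le> i \<Longrightarrow> i < k0 \<Longrightarrow> \<not> order_stat_escapes s l \<eta> i"
  shows "fst (scan_c s l \<eta> k fuel) = k0"
  using assms
proof (induction fuel arbitrary: k)
  case (Suc fuel)
  show ?case
  proof (cases "k = k0")
    case False
    then have "fst (scan_c s l \<eta> (k + 1) fuel) = k0"
      using Suc.prems by (intro Suc.IH) auto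
    then show ?thesis
      using False Suc.prems(2,4) by (simp add: scan_c_Suc)
  qed (use Suc.prems(1) in \<open>simp add: scan_c_Suc\<close>)
qed simp

lemma scan_c_eq_A_hat:
  assumes "2 \<le> length x" "0 \<le> \<eta>"
  shows "fst (scan_c (sort x) (length x div 2) \<eta> 1 (length x)) = A_hat \<eta> x"
proof -
  let ?esc = "order_stat_escapes (sort x) (length x div 2) \<eta>"
  define k0 where "k0 = (LEAST k. ?esc k)"
  have "?esc (length x div 2)"
    by (simp add: order_stat_escapes_def)
  then have "?esc k0" "k0 \<le> length x div 2"
    unfolding k0_def by (auto intro: LeastI Least_le)
  moreover have "\<not> ?esc 0"
    using assms by (simp add: order_stat_escapes_def)
  then have "1 \<le> k0"
    using \<open>?esc k0\<close> by (cases k0) auto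
  moreover have "\<not> ?esc i" if "i < k0" for i
    using that not_less_Least unfolding k0_def by blast
  ultimately have "fst (scan_c (sort x) (length x div 2) \<eta> 1 (length x)) = k0"
    by (intro scan_c_eq_first_escape) auto
  then show ?thesis
    using A_hat_eq_Least_order_stat_escapes[OF assms] by (simp add: k0_def)
qed

lemma m_tilde_alg_eq:
  "m_tilde_alg \<epsilon> \<delta> \<eta> x z1 z2 =
     (let sc = scan_c (sort x) (length x div 2) \<eta> 1 (length x)
      in (if real (fst sc) + z1 / \<epsilon> \<le> 1 + (1/\<epsilon>) * ln (2/\<delta>) then None
          else Some (sort x ! (length x div 2 - 1) + (\<eta>/\<epsilon>) * z2),
          snd (msort_c x) + snd sc + 10))"
  unfolding m_tilde_alg_def by (simp add: Let_def split_beta msort_c_eq_sort)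

lemma fst_m_tilde_alg:
  assumes "2 \<le> length x" "0 \<le> \<eta>"
  shows "fst (m_tilde_alg \<epsilon> \<delta> \<eta> x z1 z2) = m_tilde \<epsilon> \<delta> \<eta> x z1 z2"
  using scan_c_eq_A_hat[OF assms]
  by (simp add: m_tilde_alg_eq m_tilde_def A_tilde_def med_hat_def ord_coord_def ell_def Let_def)

lemma snd_m_tilde_alg_le:
  assumes "2 \<le> length x"
  shows "real (snd (m_tilde_alg \<epsilon> \<delta> \<eta> x z1 z2)) \<le> 40 * real (length x) * ln (real (length x))"
proof -
  define n where "n = length x"
  have n: "2 \<le> real n" using assms by (simp add: n_def)
  have "real n * (1 / 2) \<le> real n * ln (real n)"
    using half_le_ln[OF n] n by (intro mult_left_mono) auto
  then have "real n + 11 \<le> 16 * real n * ln (real n)"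
    using n by linarith
  moreover have "real (snd (scan_c (sort x) (n div 2) \<eta> 1 n)) \<le> real n + 1"
    using scan_c_cost[of "sort x" "n div 2" \<eta> 1 n] by linarith
  ultimately show ?thesis
    using msort_c_cost[OF assms] by (simp add: m_tilde_alg_eq Let_def n_def)
qed

theorem lemma5:
  fixes \<epsilon> \<delta> \<eta> :: real
  assumes "\<epsilon> > 0" and "\<delta> > 0" and "\<eta> > 0"
  shows "\<exists>C::real. \<forall>(x::real list) (z1::real) (z2::real). length x \<ge> 2 \<longrightarrow>
           fst (m_tilde_alg \<epsilon> \<delta> \<eta> x z1 z2) = m_tilde \<epsilon> \<delta> \<eta> x z1 z2 \<and>
           real (snd (m_tilde_alg \<epsilon> \<delta> \<eta> x z1 z2))
             \<le> C * real (length x) * ln (real (length x))"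
  \<comment> \<open>Neither \<epsilon> nor \<delta> affects the correctness or the cost.\<close>
  using fst_m_tilde_alg snd_m_tilde_alg_le \<open>\<eta> > 0\<close> by (intro exI[of _ 40]) auto

end
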